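(* Let $(\mathfrak{A},\mathfrak{A}_0)$ be a *-semisimple CQ*-algebra as in the context, let $X\in\mathfrak{A}$ be normal, $\varphi\in\mathcal{P}_{\mathfrak{A}_0}(\mathfrak{A})$ and $\alpha\in\mathbb{C}$. Then $\varphi$ is a generalized eigenvector of $X$ with generalized eigenvalue $\alpha$ if and only if $\varphi$ is a generalized eigenvector of $X^*$ with generalized eigenvalue $\overline{\alpha}$.
   Context: Let $\mathfrak{A}_0$ be a unital C*-algebra with C*-norm $\|\cdot\|_0$ and unit $I$, and $\|\cdot\|$ another norm on $\mathfrak{A}_0$ with $\|A\|\le\|A\|_0$, $\|AB\|\le\|A\|\,\|B\|_0$, $\|A^*\|=\|A\|$. $\mathfrak{A}$ is the $\|\cdot\|$-completion of $\mathfrak{A}_0$, with $XA,AX,X^*$ ($X\in\mathfrak{A},A\in\mathfrak{A}_0$) defined as $\|\cdot\|$-limits of $A_nA$, $AA_n$, $A_n^*$ for $A_n\in\mathfrak{A}_0$, $A_n\to X$. $\mathcal{P}_{\mathfrak{A}_0}(\mathfrak{A})$ is the set of sesquilinear forms $\varphi$ on $\mathfrak{A}\times\mathfrak{A}$ with $\varphi(X,X)\ge0$, $\varphi(XA,B)=\varphi(A,X^*B)$ for $X\in\mathfrak{A}$, $A,B\in\mathfrak{A}_0$, and $|\varphi(X,Y)|\le\gamma\|X\|\|Y\|$ for some $\gamma>0$; $\mathcal{S}_{\mathfrak{A}_0}(\mathfrak{A})$ is the subset with $\gamma\le1$. *-semisimple: for every $X\ne0$ there is $\varphi\in\mathcal{S}_{\mathfrak{A}_0}(\mathfrak{A})$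 with $\varphi(X,X)>0$. $X\in\mathfrak{A}$ is normal if $\varphi(XA,XA)=\varphi(X^*A,X^*A)$ for all $\varphi\in\mathcal{P}_{\mathfrak{A}_0}(\mathfrak{A})$, $A\in\mathfrak{A}_0$. A nonzero $\varphi\in\mathcal{P}_{\mathfrak{A}_0}(\mathfrak{A})$ is a generalized eigenvector of $Z\in\mathfrak{A}$ with generalized eigenvalue $\beta\in\mathbb{C}$ if there exists $A\in\mathfrak{A}_0$ with $\varphi(A,A)>0$ and $\varphi(ZA-\beta A,B)=0$ for all $B\in\mathfrak{A}_0$. *)

theory Defs
  imports "HOL-Analysis.Analysis"
begin

text \<open>The completion \<open>\<AA>\<close> is modelled as a real Banach space type \<open>'a\<close> (its norm is the
  norm \<open>\<parallel>.\<parallel>\<close> of the paper) equipped with a complex scalar multiplication \<open>sc\<close>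
  compatible with the real one, i.e. a complex Banach space.
  \<open>A0\<close> is the (dense) subset \<open>\<AA>\<^sub>0\<close>, \<open>m\<close> the multiplication, \<open>s\<close> the involution,
  \<open>n0\<close> the C*-norm on \<open>A0\<close>, \<open>I\<close> the unit.\<close>

definition complex_banach :: "(complex \<Rightarrow> 'a::{real_normed_vector,complete_space} \<Rightarrow> 'a) \<Rightarrow> bool" where
  "complex_banach sc \<longleftrightarrow>
     (\<forall>r x. sc (complex_of_real r) x = r *\<^sub>R x) \<and>
     (\<forall>a b x. sc (a * b) x = sc a (sc b x)) \<and>
     (\<forall>a b x. sc (a + b) x = sc a x + sc b x) \<and>
     (\<forall>a x y. sc a (x + y) = sc a x + sc a y) \<and>
     (\<forall>a x. norm (sc a x) = cmod a * norm x)"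

definition unital_Cstar_alg ::
  "(complex \<Rightarrow> 'a::{real_normed_vector,complete_space} \<Rightarrow> 'a) \<Rightarrow> 'a set \<Rightarrow> ('a \<Rightarrow> 'a \<Rightarrow> 'a) \<Rightarrow> ('a \<Rightarrow> 'a)
     \<Rightarrow> ('a \<Rightarrow> real) \<Rightarrow> 'a \<Rightarrow> bool" where
  "unital_Cstar_alg sc A0 m s n0 I \<longleftrightarrow>
     \<comment> \<open>A0 is a complex subspace closed under product and involution, containing I\<close>
     0 \<in> A0 \<and> (\<forall>x\<in>A0. \<forall>y\<in>A0. x + y \<in> A0) \<and> (\<forall>c. \<forall>x\<in>A0. sc c x \<in> A0) \<and>
     (\<forall>x\<in>A0. \<forall>y\<in>A0. m x y \<in> A0) \<and> (\<forall>x\<in>A0. s x \<in> A0) \<and> I \<in> A0 \<and>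
     \<comment> \<open>associative bilinear product with unit I\<close>
     (\<forall>x\<in>A0. \<forall>y\<in>A0. \<forall>z\<in>A0. m (x + y) z = m x z + m y z \<and> m x (y + z) = m x y + m x z
        \<and> m (m x y) z = m x (m y z)) \<and>
     (\<forall>c. \<forall>x\<in>A0. \<forall>y\<in>A0. m (sc c x) y = sc c (m x y) \<and> m x (sc c y) = sc c (m x y)) \<and>
     (\<forall>x\<in>A0. m I x = x \<and> m x I = x) \<and>
     \<comment> \<open>involution\<close>
     (\<forall>x\<in>A0. \<forall>y\<in>A0. s (x + y) = s x + s y \<and> s (m x y) = m (s y) (s x)) \<and>
     (\<forall>c. \<forall>x\<in>A0. s (sc c x) = sc (cnj c) (s x)) \<and>
     (\<forall>x\<in>A0. s (s x) = x) \<and>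
     \<comment> \<open>C*-norm\<close>
     (\<forall>x\<in>A0. n0 x = 0 \<longleftrightarrow> x = 0) \<and>
     (\<forall>x\<in>A0. \<forall>y\<in>A0. n0 (x + y) \<le> n0 x + n0 y \<and> n0 (m x y) \<le> n0 x * n0 y) \<and>
     (\<forall>c. \<forall>x\<in>A0. n0 (sc c x) = cmod c * n0 x) \<and>
     (\<forall>x\<in>A0. n0 (m (s x) x) = (n0 x)\<^sup>2) \<and>
     \<comment> \<open>completeness of A0 w.r.t. n0\<close>
     (\<forall>f. (\<forall>k. f k \<in> A0) \<and> (\<forall>e>0. \<exists>N. \<forall>i\<ge>N. \<forall>j\<ge>N. n0 (f i - f j) < e)
          \<longrightarrow> (\<exists>x\<in>A0. (\<lambda>k. n0 (f k - x)) \<longlonglongrightarrow> 0))"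

definition CQ_setting ::
  "(complex \<Rightarrow> 'a::{real_normed_vector,complete_space} \<Rightarrow> 'a) \<Rightarrow> 'a set \<Rightarrow> ('a \<Rightarrow> 'a \<Rightarrow> 'a) \<Rightarrow> ('a \<Rightarrow> 'a)
     \<Rightarrow> ('a \<Rightarrow> real) \<Rightarrow> 'a \<Rightarrow> bool" where
  "CQ_setting sc A0 m s n0 I \<longleftrightarrow>
     complex_banach sc \<and> unital_Cstar_alg sc A0 m s n0 I \<and>
     (\<forall>x\<in>A0. norm x \<le> n0 x) \<and>
     (\<forall>x\<in>A0. \<forall>y\<in>A0. norm (m x y) \<le> norm x * n0 y) \<and>
     (\<forall>x\<in>A0. norm (s x) = norm x) \<and>
     \<comment> \<open>'a is the completion: A0 is dense\<close>
     closure A0 = UNIV \<and>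
     \<comment> \<open>XA, AX, X* are the limits of A_n A, A A_n, A_n* for A_n in A0, A_n \<rightarrow> X\<close>
     (\<forall>f X. (\<forall>k. f k \<in> A0) \<and> f \<longlonglongrightarrow> X \<longrightarrow>
        (\<forall>A\<in>A0. (\<lambda>k. m (f k) A) \<longlonglongrightarrow> m X A \<and> (\<lambda>k. m A (f k)) \<longlonglongrightarrow> m A X) \<and>
        (\<lambda>k. s (f k)) \<longlonglongrightarrow> s X)"

definition sesquilinear :: "(complex \<Rightarrow> 'a::real_normed_vector \<Rightarrow> 'a) \<Rightarrow> ('a \<Rightarrow> 'a \<Rightarrow> complex) \<Rightarrow> bool" where
  "sesquilinear sc \<phi> \<longleftrightarrow>
     (\<forall>x y z. \<phi> (x + y) z = \<phi> x z + \<phi> y z \<and> \<phi> z (x + y) = \<phi> z x + \<phi> z y) \<and>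
     (\<forall>c x y. \<phi> (sc c x) y = c * \<phi> x y \<and> \<phi> x (sc c y) = cnj c * \<phi> x y)"

definition P_forms ::
  "(complex \<Rightarrow> 'a::real_normed_vector \<Rightarrow> 'a) \<Rightarrow> 'a set \<Rightarrow> ('a \<Rightarrow> 'a \<Rightarrow> 'a) \<Rightarrow> ('a \<Rightarrow> 'a)
     \<Rightarrow> ('a \<Rightarrow> 'a \<Rightarrow> complex) set" where
  "P_forms sc A0 m s = {\<phi>. sesquilinear sc \<phi> \<and>
     (\<forall>X. Im (\<phi> X X) = 0 \<and> Re (\<phi> X X) \<ge> 0) \<and>
     (\<forall>X. \<forall>A\<in>A0. \<forall>B\<in>A0. \<phi> (m X A) B = \<phi> A (m (s X) B)) \<and>
     (\<exists>\<gamma>>0. \<forall>X Y. cmod (\<phi> X Y) \<le> \<gamma> * norm X * norm Y)}"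

definition S_forms ::
  "(complex \<Rightarrow> 'a::real_normed_vector \<Rightarrow> 'a) \<Rightarrow> 'a set \<Rightarrow> ('a \<Rightarrow> 'a \<Rightarrow> 'a) \<Rightarrow> ('a \<Rightarrow> 'a)
     \<Rightarrow> ('a \<Rightarrow> 'a \<Rightarrow> complex) set" where
  "S_forms sc A0 m s = {\<phi>. sesquilinear sc \<phi> \<and>
     (\<forall>X. Im (\<phi> X X) = 0 \<and> Re (\<phi> X X) \<ge> 0) \<and>
     (\<forall>X. \<forall>A\<in>A0. \<forall>B\<in>A0. \<phi> (m X A) B = \<phi> A (m (s X) B)) \<and>
     (\<exists>\<gamma>>0. \<gamma> \<le> 1 \<and> (\<forall>X Y. cmod (\<phi> X Y) \<le> \<gamma> * norm X * norm Y))}"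

definition star_semisimple where
  "star_semisimple sc A0 m s \<longleftrightarrow>
     (\<forall>X. X \<noteq> 0 \<longrightarrow> (\<exists>\<phi>\<in>S_forms sc A0 m s. Im (\<phi> X X) = 0 \<and> Re (\<phi> X X) > 0))"

definition normal_elem where
  "normal_elem sc A0 m s X \<longleftrightarrow>
     (\<forall>\<phi>\<in>P_forms sc A0 m s. \<forall>A\<in>A0. \<phi> (m X A) (m X A) = \<phi> (m (s X) A) (m (s X) A))"

definition gen_eigenvector where
  "gen_eigenvector sc A0 m s \<phi> Z \<beta> \<longleftrightarrow>
     \<phi> \<in> P_forms sc A0 m s \<and> \<phi> \<noteq> (\<lambda>_ _. 0) \<and>
     (\<exists>A\<in>A0. Im (\<phi> A A) = 0 \<and> Re (\<phi> A A) > 0 \<and>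
        (\<forall>B\<in>A0. \<phi> (m Z A - sc \<beta> A) B = 0))"

end

theory Submission
  imports Defs
begin

text \<open>For normal \<open>X\<close>, expanding both sides and using \<open>\<phi>(XA, A) = \<phi>(A, X\<^sup>*A)\<close> gives
  \<open>\<phi>(XA - \<alpha>A, XA - \<alpha>A) = \<phi>(X\<^sup>*A - \<alpha>\<^sup>*A, X\<^sup>*A - \<alpha>\<^sup>*A)\<close>. For a positive bounded form, a vector
  \<open>W\<close> satisfies \<open>\<phi>(W, B) = 0\<close> for all \<open>B \<in> \<AA>\<^sub>0\<close> iff \<open>\<phi>(W, W) = 0\<close>: one direction is
  Cauchy-Schwarz, the other continuity of \<open>\<phi>(W, -)\<close> and density of \<open>\<AA>\<^sub>0\<close>. Hence both
  eigenvalue conditions are equivalent for every \<open>A\<close>.\<close>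

lemma sesquilinear_diff:
  assumes "sesquilinear sc \<phi>"
  shows sesquilinear_diff_left: "\<phi> (x - y) z = \<phi> x z - \<phi> y z"
    and sesquilinear_diff_right: "\<phi> z (x - y) = \<phi> z x - \<phi> z y"
  using assms unfolding sesquilinear_def by (metis add_diff_cancel_right' diff_add_cancel)+

lemma sesquilinear_hermitian:
  assumes S: "sesquilinear sc \<phi>" and real_diag: "\<forall>x. Im (\<phi> x x) = 0"
  shows "\<phi> y x = cnj (\<phi> x y)"
proof -
  have add: "\<And>x y z. \<phi> (x + y) z = \<phi> x z + \<phi> y z \<and> \<phi> z (x + y) = \<phi> z x + \<phi> z y"
    and scale: "\<And>c x y. \<phi> (sc c x) y = c * \<phi> x y \<and> \<phi> x (sc c y) = cnj c * \<phi> x y"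
    using S unfolding sesquilinear_def by blast+
  have sum: "\<phi> (x + y) (x + y) = \<phi> x x + \<phi> x y + \<phi> y x + \<phi> y y"
    using add by simp
  have im: "Im (\<phi> x y) + Im (\<phi> y x) = 0"
    using arg_cong[OF sum, of Im] real_diag by simp
  have twisted_sum:
    "\<phi> (x + sc \<i> y) (x + sc \<i> y) = \<phi> x x - \<i> * \<phi> x y + \<i> * \<phi> y x + \<phi> y y"
    using add scale by (simp add: algebra_simps)
  have re: "Re (\<phi> y x) - Re (\<phi> x y) = 0"
    using arg_cong[OF twisted_sum, of Im] real_diag by simp
  show ?thesis
    using im re by (simp add: complex_eq_iff)
qed

lemma positive_sesquilinear_null_left:
  assumes S: "sesquilinear sc \<phi>" and pos: "\<forall>x. Im (\<phi> x x) = 0 \<and> Re (\<phi> x x) \<ge> 0"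
    and null: "\<phi> w w = 0"
  shows "\<phi> w y = 0"
proof (rule ccontr)
  assume "\<phi> w y \<noteq> 0"
  define a where "a = \<phi> w y"
  define n where "n = (cmod a)\<^sup>2"
  \<comment> \<open>\<open>t\<close> is chosen so that \<open>\<phi>(cw + y, cw + y) = -1\<close>\<close>
  define t where "t = (Re (\<phi> y y) + 1) / (2 * n)"
  define c where "c = - complex_of_real t * cnj a"
  have "n > 0"
    using \<open>\<phi> w y \<noteq> 0\<close> by (simp add: n_def a_def)
  have add: "\<And>x y z. \<phi> (x + y) z = \<phi> x z + \<phi> y z \<and> \<phi> z (x + y) = \<phi> z x + \<phi> z y"
    and scale: "\<And>c x y. \<phi> (sc c x) y = c * \<phi> x y \<and> \<phi> x (sc c y) = cnj c * \<phi> x y"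
    using S unfolding sesquilinear_def by blast+
  have "\<phi> y w = cnj a"
    unfolding a_def using sesquilinear_hermitian[OF S] pos by blast
  then have "\<phi> (sc c w + y) (sc c w + y) = c * a + cnj (c * a) + \<phi> y y"
    using add scale null by (simp add: a_def algebra_simps)
  moreover have "c * a = - complex_of_real (t * n)"
    using complex_norm_square[of a] by (simp add: c_def n_def mult.assoc mult.commute[of "cnj a"])
  moreover have "t * n = (Re (\<phi> y y) + 1) / 2"
    using \<open>n > 0\<close> by (simp add: t_def)
  ultimately have "Re (\<phi> (sc c w + y) (sc c w + y)) = -1"
    by simp
  then show False
    using pos by (metis neg_0_le_iff_le not_one_le_zero)
qed

lemma bounded_sesquilinear_vanishes_on_closure:
  assumes S: "sesquilinear sc \<phi>" and bound: "\<forall>x y. cmod (\<phi> x y) \<le> \<gamma> * norm x * norm y"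
    and "\<gamma> > 0" and vanish: "\<forall>b\<in>B. \<phi> w b = 0" and "y \<in> closure B"
  shows "\<phi> w y = 0"
proof (rule continuous_constant_on_closure[where f = "\<phi> w"])
  have "lipschitz_on (\<gamma> * norm w) UNIV (\<phi> w)"
  proof (rule lipschitz_onI)
    fix x z
    have "dist (\<phi> w x) (\<phi> w z) = cmod (\<phi> w (x - z))"
      by (simp add: dist_norm sesquilinear_diff_right[OF S])
    also have "\<dots> \<le> \<gamma> * norm w * dist x z"
      using bound by (simp add: dist_norm)
    finally show "dist (\<phi> w x) (\<phi> w z) \<le> \<gamma> * norm w * dist x z" .
  qed (use \<open>\<gamma> > 0\<close> in simp)
  then show "continuous_on (closure B) (\<phi> w)"
    by (meson continuous_on_subset lipschitz_on_continuous_on subset_UNIV)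
qed (use vanish \<open>y \<in> closure B\<close> in auto)

lemma P_forms_annihilated_by_dense_iff_null:
  assumes "\<phi> \<in> P_forms sc A0 m s" and "closure A0 = UNIV"
  shows "(\<forall>b\<in>A0. \<phi> w b = 0) \<longleftrightarrow> \<phi> w w = 0"
proof -
  have S: "sesquilinear sc \<phi>" and pos: "\<forall>x. Im (\<phi> x x) = 0 \<and> Re (\<phi> x x) \<ge> 0"
    and "\<exists>\<gamma>>0. \<forall>x y. cmod (\<phi> x y) \<le> \<gamma> * norm x * norm y"
    using assms(1) unfolding P_forms_def by blast+
  then obtain \<gamma> where "\<gamma> > 0" "\<forall>x y. cmod (\<phi> x y) \<le> \<gamma> * norm x * norm y"
    by blast
  then show ?thesis
    using positive_sesquilinear_null_left[OF S pos] bounded_sesquilinear_vanishes_on_closure[OF S]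
      assms(2) by blast
qed

lemma normal_elem_residual_self_eq:
  assumes P: "\<phi> \<in> P_forms sc A0 m s" and "normal_elem sc A0 m s X" and "a \<in> A0"
  shows "\<phi> (m X a - sc \<alpha> a) (m X a - sc \<alpha> a)
       = \<phi> (m (s X) a - sc (cnj \<alpha>) a) (m (s X) a - sc (cnj \<alpha>) a)"
proof -
  have S: "sesquilinear sc \<phi>" and real_diag: "\<forall>x. Im (\<phi> x x) = 0"
    and adjoint: "\<forall>X. \<forall>a\<in>A0. \<forall>b\<in>A0. \<phi> (m X a) b = \<phi> a (m (s X) b)"
    using P unfolding P_forms_def by blast+
  have scale: "\<And>c x y. \<phi> (sc c x) y = c * \<phi> x y \<and> \<phi> x (sc c y) = cnj c * \<phi> x y"
    using S unfolding sesquilinear_def by blast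
  have "\<phi> (m X a) (m X a) = \<phi> (m (s X) a) (m (s X) a)"
    using assms unfolding normal_elem_def by blast
  moreover have "\<phi> (m X a) a = \<phi> a (m (s X) a)"
    using adjoint \<open>a \<in> A0\<close> by blast
  moreover from this have "\<phi> a (m X a) = \<phi> (m (s X) a) a"
    using sesquilinear_hermitian[OF S real_diag] by metis
  ultimately show ?thesis
    by (simp add: sesquilinear_diff[OF S] scale algebra_simps)
qed

theorem proposition4p15:
  fixes sc :: "complex \<Rightarrow> 'a::{real_normed_vector,complete_space} \<Rightarrow> 'a"
    and A0 :: "'a set" and m :: "'a \<Rightarrow> 'a \<Rightarrow> 'a" and s :: "'a \<Rightarrow> 'a"
    and n0 :: "'a \<Rightarrow> real" and I :: 'a
    and X :: 'a and \<phi> :: "'a \<Rightarrow> 'a \<Rightarrow> complex" and \<alpha> :: complex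
  assumes "CQ_setting sc A0 m s n0 I"
    and "star_semisimple sc A0 m s"
    and "normal_elem sc A0 m s X"
    and "\<phi> \<in> P_forms sc A0 m s"
  shows "gen_eigenvector sc A0 m s \<phi> X \<alpha> \<longleftrightarrow> gen_eigenvector sc A0 m s \<phi> (s X) (cnj \<alpha>)"
proof -
  have dense: "closure A0 = UNIV"
    using assms(1) unfolding CQ_setting_def by blast
  have "(\<forall>b\<in>A0. \<phi> (m X a - sc \<alpha> a) b = 0) \<longleftrightarrow> (\<forall>b\<in>A0. \<phi> (m (s X) a - sc (cnj \<alpha>) a) b = 0)"
    if "a \<in> A0" for a
    using P_forms_annihilated_by_dense_iff_null[OF assms(4) dense]
      normal_elem_residual_self_eq[OF assms(4,3) that] by presburger
  then show ?thesis
    unfolding gen_eigenvector_def by blast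
qed

end
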